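(* Let $Y$ be a Young diagram with row lengths $a_1\ge\cdots\ge a_m\ge0$ and size $|Y|=\sum_i a_i$. If $\tau^{(2)}(H(Y))=|Y|$, then $Y$ is wide.
   Context: A Young diagram with row lengths $a_1\ge\cdots\ge a_m\ge 0$ represents the partition $|Y|=a_1+\cdots+a_m$. Its conjugate $Y'$ has row lengths $b_j=|\{i:a_i\ge j\}|$. A diagram $X$ dominates a diagram $Z$ of the same size if $\sum_{i=1}^k a_i(X)\ge \sum_{i=1}^k a_i(Z)$ for all $k\ge1$ (padding with zeros). $Y$ is wide if for every subset of its rows, the diagram $Z$ formed by those rows dominates $Z'$. The hypergraph $H(Y)$ has vertex sides $R=\{r_1,\dots,r_m\}$, $C=\{c_1,\dots,c_{a_1}\}$, $S=\{s_1,\dots,s_{a_1}\}$ and edges $\{r_i,c_j,s_k\}$ for all $1\le i\le m$, $1\le j,k\le a_i$. A 2-cover of a hypergraph $H$ is a set $P$ of 2-element vertex sets, each contained in some edge, such that every edge of $H$ contains a member of $P$; $\tau^{(2)}(H)$ is the minimum size of a 2-cover. *)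

theory Defs
  imports Main
begin

text \<open>A Young diagram is given by its list of row lengths a_1 \<ge> ... \<ge> a_m \<ge> 0
  (0-based list indices).\<close>

definition young :: "nat list \<Rightarrow> bool" where
  "young a \<longleftrightarrow> sorted_wrt (\<ge>) a"

definition diag_size :: "nat list \<Rightarrow> nat" where
  "diag_size a = sum_list a"

definition conjugate :: "nat list \<Rightarrow> nat list" where
  "conjugate a = map (\<lambda>j. card {i. i < length a \<and> a ! i \<ge> j}) [1..<Suc (Max (set (0 # a)))]"

definition dominates :: "nat list \<Rightarrow> nat list \<Rightarrow> bool" where
  "dominates x z \<longleftrightarrow> sum_list x = sum_list z \<and> (\<forall>k\<ge>1. sum_list (take k x) \<ge> sum_list (take k z))"

definition wide :: "nat list \<Rightarrow> bool" where
  "wide a \<longleftrightarrow> (\<forall>S \<subseteq> {..<length a}. dominates (nths a S) (conjugate (nths a S)))"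

datatype vert = R nat | C nat | S nat

text \<open>The hypergraph H(Y), as its set of edges {r_i, c_j, s_k}, 1 \<le> j,k \<le> a_i
  (indices shifted to be 0-based).\<close>
definition H :: "nat list \<Rightarrow> vert set set" where
  "H a = {{R i, C j, S k} | i j k. i < length a \<and> j < a ! i \<and> k < a ! i}"

definition two_cover :: "'v set set \<Rightarrow> 'v set set \<Rightarrow> bool" where
  "two_cover E P \<longleftrightarrow>
     (\<forall>p\<in>P. card p = 2 \<and> (\<exists>e\<in>E. p \<subseteq> e)) \<and> (\<forall>e\<in>E. \<exists>p\<in>P. p \<subseteq> e)"

definition tau2 :: "'v set set \<Rightarrow> nat" where
  "tau2 E = (LEAST n. \<exists>P. two_cover E P \<and> finite P \<and> card P = n)"

end

theory Submission
  imports Defs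
begin

text \<open>If \<open>Y\<close> is not wide, there are a set \<open>Q\<close> of rows and a \<open>k \<ge> 1\<close> such that the
  \<open>k\<close> largest rows in \<open>Q\<close> have total length less than \<open>\<Sum>i\<in>Q. min a\<^sub>i k\<close>, the length of the
  first \<open>k\<close> rows of the conjugate.
  If \<open>m\<close> is the \<open>k\<close>-th largest row in \<open>Q\<close>, that total length is \<open>k m + \<Sum>i\<in>Q. (a\<^sub>i - m)\<close>.
  The pairs \<open>{c\<^sub>j, s\<^sub>l}\<close> with \<open>j < k, l < m\<close>, the pairs \<open>{r\<^sub>i, c\<^sub>j}\<close> with \<open>i \<in> Q, j \<ge> k\<close>,
  the pairs \<open>{r\<^sub>i, s\<^sub>l}\<close> with \<open>i \<in> Q, l \<ge> m\<close> and all pairs \<open>{r\<^sub>i, c\<^sub>j}\<close> with \<open>i \<notin> Q\<close> form a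
  2-cover of \<open>H(Y)\<close> of size \<open>k m + \<Sum>i\<in>Q. (a\<^sub>i - k) + \<Sum>i\<in>Q. (a\<^sub>i - m) + \<Sum>i\<notin>Q. a\<^sub>i\<close>,
  and this is less than \<open>|Y|\<close> because \<open>\<Sum>i\<in>Q. a\<^sub>i = \<Sum>i\<in>Q. (a\<^sub>i - k) + \<Sum>i\<in>Q. min a\<^sub>i k\<close>.\<close>

lemma sorted_wrt_nths: "sorted_wrt P xs \<Longrightarrow> sorted_wrt P (nths xs I)"
  by (induction xs arbitrary: I) (auto simp: nths_Cons dest: in_set_nthsD)

lemma sum_list_map_nths:
  "sum_list (map f (nths xs I)) = (\<Sum>i | i < length xs \<and> i \<in> I. f (xs ! i))"
proof (induction xs rule: rev_induct)
  case (snoc x xs)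
  have "{i. i < length (xs @ [x]) \<and> i \<in> I}
      = {i. i < length xs \<and> i \<in> I} \<union> (if length xs \<in> I then {length xs} else {})"
    by (auto simp: less_Suc_eq)
  moreover have "(\<Sum>i | i < length xs \<and> i \<in> I. f ((xs @ [x]) ! i))
               = (\<Sum>i | i < length xs \<and> i \<in> I. f (xs ! i))"
    by (rule sum.cong) (auto simp: nth_append)
  ultimately show ?case
    using snoc by (simp add: nths_append add.commute)
qed simp

lemma sum_list_take_conjugate:
  "sum_list (take k (conjugate z)) = (\<Sum>x\<leftarrow>z. min x k)"
proof -
  define M where "M = Max (set (0 # z))"
  define n where "n = length z"
  have le_M: "z ! i \<le> M" if "i < n" for i
    using that by (simp add: M_def n_def)
  have "take k [1..<Suc M] = [1..<Suc (min k M)]"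
    by (cases "k \<le> M") (simp_all add: min_def del: upt_Suc)
  then have "take k (conjugate z) = map (\<lambda>j. card {i. i < n \<and> j \<le> z ! i}) [1..<Suc (min k M)]"
    by (simp add: conjugate_def M_def n_def take_map del: upt_Suc)
  then have "sum_list (take k (conjugate z)) = (\<Sum>j=1..min k M. \<Sum>i<n. of_bool (j \<le> z ! i))"
    by (simp add: sum_set_upt_conv_sum_list_nat[symmetric] atLeastLessThanSuc_atLeastAtMost
        lessThan_def Int_def del: upt_Suc)
  also have "\<dots> = (\<Sum>i<n. \<Sum>j=1..min k M. of_bool (j \<le> z ! i))"
    by (rule sum.swap)
  also have "\<dots> = (\<Sum>i<n. min (z ! i) k)"
  proof (rule sum.cong)
    fix i assume "i \<in> {..<n}"
    then have "z ! i \<le> M"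
      by (simp add: le_M)
    then have "{1..min k M} \<inter> {j. j \<le> z ! i} = {1..min (z ! i) k}"
      by auto
    then show "(\<Sum>j=1..min k M. of_bool (j \<le> z ! i)) = min (z ! i) k"
      by simp
  qed simp
  also have "\<dots> = (\<Sum>x\<leftarrow>z. min x k)"
    by (simp add: sum_list_sum_nth n_def atLeast0LessThan)
  finally show ?thesis .
qed

lemma sum_list_conjugate: "sum_list (conjugate z) = sum_list z"
proof -
  have "min x (length (conjugate z)) = x" if "x \<in> set z" for x
  proof -
    have "x \<le> Max (set (0 # z))"
      using that by simp
    then show ?thesis
      by (simp add: conjugate_def)
  qed
  then show ?thesis
    using sum_list_take_conjugate[of "length (conjugate z)" z] by (simp add: map_idI)
qed

lemma dominates_conjugate_iff:
  "dominates z (conjugate z) \<longleftrightarrow> (\<forall>k\<ge>1. (\<Sum>x\<leftarrow>z. min x k) \<le> sum_list (take k z))"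
  by (simp add: dominates_def sum_list_conjugate sum_list_take_conjugate)

lemma sum_list_take_sorted_desc:
  fixes z :: "nat list"
  assumes sorted: "sorted_wrt (\<ge>) z" and "0 < k" "k \<le> length z"
  shows "sum_list (take k z) = k * z ! (k - 1) + (\<Sum>x\<leftarrow>z. x - z ! (k - 1))"
proof -
  define m where "m = z ! (k - 1)"
  have above: "m \<le> x" if "x \<in> set (take k z)" for x
  proof -
    have "\<exists>i<k. x = z ! i"
      using that assms(3) by (auto simp: set_conv_nth)
    then obtain i where "i < k" "x = z ! i"
      by blast
    then show ?thesis
      using sorted assms(3) by (cases "i = k - 1") (auto simp: m_def sorted_wrt_iff_nth_less)
  qed
  have below: "x \<le> m" if "x \<in> set (drop k z)" for x
  proof -
    have "\<exists>i<length z - k. x = z ! (k + i)"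
      using that by (auto simp: set_conv_nth)
    then obtain i where "i < length z - k" "x = z ! (k + i)"
      by blast
    then show ?thesis
      using sorted \<open>0 < k\<close> by (auto simp: m_def sorted_wrt_iff_nth_less)
  qed
  have "(\<Sum>x\<leftarrow>z. x - m) = (\<Sum>x\<leftarrow>take k z. x - m) + (\<Sum>x\<leftarrow>drop k z. x - m)"
    by (simp flip: sum_list_append map_append)
  also have "(\<Sum>x\<leftarrow>drop k z. x - m) = 0"
    using below by simp
  finally have split: "(\<Sum>x\<leftarrow>z. x - m) = (\<Sum>x\<leftarrow>take k z. x - m)"
    by simp
  have "sum_list (take k z) = (\<Sum>x\<leftarrow>take k z. m + (x - m))"
    using above by (simp cong: map_cong)
  also have "\<dots> = k * m + (\<Sum>x\<leftarrow>take k z. x - m)"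
    using assms(3) by (simp add: sum_list_addf sum_list_triv)
  also have "\<dots> = k * m + (\<Sum>x\<leftarrow>z. x - m)"
    by (simp add: split)
  finally show ?thesis
    by (simp only: m_def)
qed

lemma not_wide_obtains_deficient_rows:
  assumes "young a" "\<not> wide a"
  obtains Q k m where "Q \<subseteq> {..<length a}"
    and "k * m + (\<Sum>i\<in>Q. a ! i - m) < (\<Sum>i\<in>Q. min (a ! i) k)"
proof -
  obtain Q where Q: "Q \<subseteq> {..<length a}" and "\<not> dominates (nths a Q) (conjugate (nths a Q))"
    using assms(2) by (auto simp: wide_def)
  define z where "z = nths a Q"
  then obtain k where "k \<ge> 1" and deficient: "sum_list (take k z) < (\<Sum>x\<leftarrow>z. min x k)"
    using \<open>\<not> dominates _ _\<close> by (auto simp: dominates_conjugate_iff not_le)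
  have "k \<le> length z"
  proof (rule ccontr)
    assume "\<not> k \<le> length z"
    then have "(\<Sum>x\<leftarrow>z. min x k) \<le> sum_list (take k z)"
      using sum_list_mono[of z "\<lambda>x. min x k" id] by simp
    with deficient show False
      by simp
  qed
  moreover have "sorted_wrt (\<ge>) z"
    using assms(1) by (simp add: young_def z_def sorted_wrt_nths)
  ultimately have "k * z ! (k - 1) + (\<Sum>x\<leftarrow>z. x - z ! (k - 1)) < (\<Sum>x\<leftarrow>z. min x k)"
    using deficient \<open>k \<ge> 1\<close> by (simp add: sum_list_take_sorted_desc)
  moreover have "{i. i < length a \<and> i \<in> Q} = Q"
    using Q by auto
  ultimately show ?thesis
    using that[OF Q] by (simp add: z_def sum_list_map_nths)
qed

lemma tau2_le_card:
  assumes "finite P"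
    and "\<And>p. p \<in> P \<Longrightarrow> card p = 2"
    and "\<And>e. e \<in> E \<Longrightarrow> \<exists>p\<in>P. p \<subseteq> e"
  shows "tau2 E \<le> card P"
proof -
  define P' where "P' = {p \<in> P. \<exists>e\<in>E. p \<subseteq> e}"
  have "two_cover E P'"
    unfolding two_cover_def
  proof (intro conjI ballI)
    fix p assume "p \<in> P'"
    then show "card p = 2" and "\<exists>e\<in>E. p \<subseteq> e"
      using assms(2) by (auto simp: P'_def)
  next
    fix e assume "e \<in> E"
    then obtain p where "p \<in> P" "p \<subseteq> e"
      using assms(3) by blast
    with \<open>e \<in> E\<close> show "\<exists>p\<in>P'. p \<subseteq> e"
      by (auto simp: P'_def)
  qed
  moreover have "finite P'"
    using assms(1) by (simp add: P'_def)
  ultimately have "tau2 E \<le> card P'"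
    unfolding tau2_def by (intro Least_le) blast
  also have "card P' \<le> card P"
    using assms(1) by (simp add: P'_def card_mono)
  finally show ?thesis .
qed

lemma tau2_H_le:
  assumes Q: "Q \<subseteq> {..<length a}"
  shows "tau2 (H a) \<le> k * m + (\<Sum>i\<in>Q. a ! i - k) + (\<Sum>i\<in>Q. a ! i - m)
                        + (\<Sum>i\<in>{..<length a} - Q. a ! i)"
proof -
  define P0 where "P0 = (\<lambda>(j, l). {C j, S l}) ` ({..<k} \<times> {..<m})"
  define P1 where "P1 = (\<lambda>(i, j). {R i, C j}) ` (SIGMA i:Q. {k..<a ! i})"
  define P2 where "P2 = (\<lambda>(i, l). {R i, S l}) ` (SIGMA i:Q. {m..<a ! i})"
  define P3 where "P3 = (\<lambda>(i, j). {R i, C j}) ` (SIGMA i:{..<length a} - Q. {..<a ! i})"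
  have "finite Q"
    using Q finite_subset by blast
  then have fin: "finite P0" "finite P1" "finite P2" "finite P3"
    by (simp_all add: P0_def P1_def P2_def P3_def)
  have pairs: "card p = 2" if "p \<in> P0 \<union> P1 \<union> P2 \<union> P3" for p
    using that by (auto simp: P0_def P1_def P2_def P3_def card_insert_if)
  have covers: "\<exists>p\<in>P0 \<union> P1 \<union> P2 \<union> P3. p \<subseteq> e" if edge: "e \<in> H a" for e
  proof -
    obtain i j l where e: "e = {R i, C j, S l}" "i < length a" "j < a ! i" "l < a ! i"
      using edge unfolding H_def by blast
    consider "i \<notin> Q" | "i \<in> Q" "k \<le> j" | "i \<in> Q" "m \<le> l" | "j < k" "l < m"
      by (meson not_le)
    then show ?thesis
    proof cases
      case 1
      then have "{R i, C j} \<in> P3"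
        using e unfolding P3_def by (intro image_eqI[where x="(i, j)"]) auto
      then show ?thesis
        using e(1) by (intro bexI[where x="{R i, C j}"]) auto
    next
      case 2
      then have "{R i, C j} \<in> P1"
        using e unfolding P1_def by (intro image_eqI[where x="(i, j)"]) auto
      then show ?thesis
        using e(1) by (intro bexI[where x="{R i, C j}"]) auto
    next
      case 3
      then have "{R i, S l} \<in> P2"
        using e unfolding P2_def by (intro image_eqI[where x="(i, l)"]) auto
      then show ?thesis
        using e(1) by (intro bexI[where x="{R i, S l}"]) auto
    next
      case 4
      then have "{C j, S l} \<in> P0"
        unfolding P0_def by (intro image_eqI[where x="(j, l)"]) auto
      then show ?thesis
        using e(1) by (intro bexI[where x="{C j, S l}"]) auto
    qed
  qed
  have "tau2 (H a) \<le> card (P0 \<union> P1 \<union> P2 \<union> P3)"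
    using fin pairs covers by (intro tau2_le_card) auto
  also have "\<dots> \<le> card P0 + card P1 + card P2 + card P3"
    by (meson add_le_mono card_Un_le le_trans order_refl)
  also have "\<dots> \<le> k * m + (\<Sum>i\<in>Q. a ! i - k) + (\<Sum>i\<in>Q. a ! i - m)
                 + (\<Sum>i\<in>{..<length a} - Q. a ! i)"
  proof -
    have "card P0 \<le> k * m"
      unfolding P0_def using card_image_le[of "{..<k} \<times> {..<m}"] by simp
    moreover have "card P1 \<le> (\<Sum>i\<in>Q. a ! i - k)"
      unfolding P1_def using card_image_le[of "SIGMA i:Q. {k..<a ! i}"] \<open>finite Q\<close>
      by (simp add: card_SigmaI)
    moreover have "card P2 \<le> (\<Sum>i\<in>Q. a ! i - m)"
      unfolding P2_def using card_image_le[of "SIGMA i:Q. {m..<a ! i}"] \<open>finite Q\<close>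
      by (simp add: card_SigmaI)
    moreover have "card P3 \<le> (\<Sum>i\<in>{..<length a} - Q. a ! i)"
      unfolding P3_def using card_image_le[of "SIGMA i:{..<length a} - Q. {..<a ! i}"]
      by (simp add: card_SigmaI)
    ultimately show ?thesis
      by linarith
  qed
  finally show ?thesis .
qed

theorem theorem3:
  fixes a :: "nat list"
  assumes "young a"
    and "tau2 (H a) = diag_size a"
  shows "wide a"
proof (rule ccontr)
  assume "\<not> wide a"
  with assms(1) obtain Q k m where Q: "Q \<subseteq> {..<length a}"
    and deficient: "k * m + (\<Sum>i\<in>Q. a ! i - m) < (\<Sum>i\<in>Q. min (a ! i) k)"
    by (rule not_wide_obtains_deficient_rows)
  have "diag_size a = (\<Sum>i\<in>Q. a ! i) + (\<Sum>i\<in>{..<length a} - Q. a ! i)"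
    using Q by (simp add: diag_size_def sum_list_sum_nth atLeast0LessThan sum.subset_diff)
  also have "(\<Sum>i\<in>Q. a ! i) = (\<Sum>i\<in>Q. a ! i - k) + (\<Sum>i\<in>Q. min (a ! i) k)"
    unfolding sum.distrib[symmetric] by (rule sum.cong) auto
  finally have "tau2 (H a) < diag_size a"
    using tau2_H_le[OF Q, of k m] deficient by linarith
  with assms(2) show False
    by simp
qed

end
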